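(* Let $R$ be a quotient root system and $\Phi\subseteq R^+$ an inversion set. The relation $\leq$ on the set of connected components of $G_\Phi^{\Phi^c}$, defined by $A\le B$ iff there is a (possibly empty) sequence of components $C_1,\dots,C_n$ such that the standard sum $A+C_1+\cdots+C_n$ is defined and equals $B$, is a partial order.
   Context: A quotient root system (QRS) $R$ is the set of non-zero images of a root system $\Delta$ (with base $\Sigma$) under the orthogonal projection of its ambient Euclidean space onto $(\mathrm{span}\,J)^\perp$ for some $J\subsetneq\Sigma$; its base consists of the images of $\Sigma\setminus J$, and every root is an integer combination of the base with all coefficients $\ge0$ (positive roots, $R^+$) or all $\le0$. $\Phi\subseteq R^+$ is closed if $\alpha,\beta\in\Phi$, $\alpha+\beta\in R$ imply $\alpha+\beta\in\Phi$; co-closed if $\Phi^c:=R^+\setminus\Phi$ is closed; an inversion set if both. $G_\Phi^{\Phi^c}$ is the graph with vertex set $\Phi$ in which $\alpha,\alpha'$ are adjacent iff $\alpha-\alpha'\in\Phi^c\cup(-\Phi^c)$; components are its connected components. Addition of components: for components $A,B$ let $Z=\{\alpha+\beta:\alpha\in A,\beta\in B\}\cap R$. If $Z\ne\emptyset$ lies in a single component $C$, $A+B:=C$. If $Z$ meets more than one component, then (as established in the paper) $A=B$ and $Z$ meets exactly two components, $A$ and some $C\ne A$; then $A+A:=C$. If $Z=\emptyset$, $A+B$ is undefined. The standard sum $A+C_1+\cdots+C_n$ means $(\cdots((A+C_1)+C_2)+\cdots)+C_n$, with every partial sum required to be defined; for $n=0$ it is $A$. *)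

theory Defs
  imports "HOL-Analysis.Analysis"
begin

definition root_system :: "'a::euclidean_space set \<Rightarrow> bool" where
  "root_system \<Delta> \<longleftrightarrow> finite \<Delta> \<and> 0 \<notin> \<Delta> \<and> span \<Delta> = UNIV \<and>
     (\<forall>\<alpha>\<in>\<Delta>. \<forall>\<beta>\<in>\<Delta>. 2 * (\<beta> \<bullet> \<alpha>) / (\<alpha> \<bullet> \<alpha>) \<in> \<int> \<and>
        \<beta> - (2 * (\<beta> \<bullet> \<alpha>) / (\<alpha> \<bullet> \<alpha>)) *\<^sub>R \<alpha> \<in> \<Delta>) \<and>
     (\<forall>\<alpha>\<in>\<Delta>. \<forall>c::real. c *\<^sub>R \<alpha> \<in> \<Delta> \<longrightarrow> c = 1 \<or> c = -1)"

definition nonneg_int_comb :: "'a::real_vector set \<Rightarrow> 'a \<Rightarrow> bool" where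
  "nonneg_int_comb B v \<longleftrightarrow>
     (\<exists>c. (\<forall>b\<in>B. c b \<in> \<int> \<and> c b \<ge> 0) \<and> v = (\<Sum>b\<in>B. c b *\<^sub>R b))"

definition is_base :: "'a::euclidean_space set \<Rightarrow> 'a set \<Rightarrow> bool" where
  "is_base \<Delta> \<Sigma> \<longleftrightarrow> \<Sigma> \<subseteq> \<Delta> \<and> independent \<Sigma> \<and>
     (\<forall>\<beta>\<in>\<Delta>. nonneg_int_comb \<Sigma> \<beta> \<or> nonneg_int_comb \<Sigma> (- \<beta>))"

definition qproj :: "'a::euclidean_space set \<Rightarrow> 'a \<Rightarrow> 'a" where
  "qproj J v = (THE w. v - w \<in> span J \<and> (\<forall>j\<in>J. w \<bullet> j = 0))"

definition qrs_roots :: "'a::euclidean_space set \<Rightarrow> 'a set \<Rightarrow> 'a set" where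
  "qrs_roots \<Delta> J = qproj J ` \<Delta> - {0}"

definition qrs_base :: "'a::euclidean_space set \<Rightarrow> 'a set \<Rightarrow> 'a set" where
  "qrs_base \<Sigma> J = qproj J ` (\<Sigma> - J)"

definition qrs_pos :: "'a::euclidean_space set \<Rightarrow> 'a set \<Rightarrow> 'a set \<Rightarrow> 'a set" where
  "qrs_pos \<Delta> \<Sigma> J = {v \<in> qrs_roots \<Delta> J. nonneg_int_comb (qrs_base \<Sigma> J) v}"

definition closed_in_rs :: "'a::ab_group_add set \<Rightarrow> 'a set \<Rightarrow> bool" where
  "closed_in_rs R \<Phi> \<longleftrightarrow> (\<forall>\<alpha>\<in>\<Phi>. \<forall>\<beta>\<in>\<Phi>. \<alpha> + \<beta> \<in> R \<longrightarrow> \<alpha> + \<beta> \<in> \<Phi>)"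

definition inversion_set :: "'a::ab_group_add set \<Rightarrow> 'a set \<Rightarrow> 'a set \<Rightarrow> bool" where
  "inversion_set R Rpos \<Phi> \<longleftrightarrow> \<Phi> \<subseteq> Rpos \<and> closed_in_rs R \<Phi> \<and> closed_in_rs R (Rpos - \<Phi>)"

definition graph_edges :: "'a::ab_group_add set \<Rightarrow> 'a set \<Rightarrow> ('a \<times> 'a) set" where
  "graph_edges Rpos \<Phi> = {(a, b). a \<in> \<Phi> \<and> b \<in> \<Phi> \<and>
      (a - b \<in> Rpos - \<Phi> \<or> a - b \<in> uminus ` (Rpos - \<Phi>))}"

definition graph_components :: "'a::ab_group_add set \<Rightarrow> 'a set \<Rightarrow> 'a set set" where
  "graph_components Rpos \<Phi> = {{b. (a, b) \<in> (graph_edges Rpos \<Phi>)\<^sup>*} | a. a \<in> \<Phi>}"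

definition comp_add :: "'a::ab_group_add set \<Rightarrow> 'a set \<Rightarrow> 'a set \<Rightarrow> 'a set \<Rightarrow> 'a set \<Rightarrow> 'a set option" where
  "comp_add R Rpos \<Phi> A B =
    (let Z = {\<alpha> + \<beta> | \<alpha> \<beta>. \<alpha> \<in> A \<and> \<beta> \<in> B} \<inter> R;
         K = {C \<in> graph_components Rpos \<Phi>. Z \<inter> C \<noteq> {}} in
     if Z = {} then None
     else if (\<exists>C. K = {C}) then Some (THE C. K = {C})
     else if A = B \<and> (\<exists>C. C \<noteq> A \<and> K = {A, C}) then Some (THE C. C \<noteq> A \<and> K = {A, C})
     else None)"

fun std_sum :: "'a::ab_group_add set \<Rightarrow> 'a set \<Rightarrow> 'a set \<Rightarrow> 'a set \<Rightarrow> 'a set list \<Rightarrow> 'a set option" where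
  "std_sum R Rpos \<Phi> A [] = Some A"
| "std_sum R Rpos \<Phi> A (C # Cs) =
     (case comp_add R Rpos \<Phi> A C of None \<Rightarrow> None | Some A' \<Rightarrow> std_sum R Rpos \<Phi> A' Cs)"

definition comp_le :: "'a::ab_group_add set \<Rightarrow> 'a set \<Rightarrow> 'a set \<Rightarrow> ('a set \<times> 'a set) set" where
  "comp_le R Rpos \<Phi> = {(A, B). A \<in> graph_components Rpos \<Phi> \<and> B \<in> graph_components Rpos \<Phi> \<and>
      (\<exists>Cs. set Cs \<subseteq> graph_components Rpos \<Phi> \<and> std_sum R Rpos \<Phi> A Cs = Some B)}"

end

theory Submission
  imports Defs
begin

text \<open>
  For
  antisymmetry, give every component its maximal height, the height of a positive root being the
  sum of its coordinates in the base. The crux is: if \<open>A + C = D \<noteq> A\<close>, then every \<open>a \<in> A\<close> has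
  a partner \<open>c \<in> C\<close> with \<open>a + c \<in> D\<close>. Such a partner is transported along the edges of \<open>A\<close>,
  using that \<open>\<Phi>\<close> is closed and that two roots with negative inner product, other than opposite
  ones, sum to a root.
  Applied to an element of maximal height of \<open>A\<close>, this shows that \<open>D\<close> has strictly larger
  maximal height than \<open>A\<close>, so a standard sum can never return to the component it started from.

  A quotient root system inherits the obtuse-sum property from \<open>\<Delta>\<close>: the fibre over a projected
  root is permuted by the reflections in \<open>J\<close>, so it is centred at that root, and some lift in it
  makes an obtuse angle with a given lift of the other root.
\<close>

lemma graph_edges_iff:
  "(a, b) \<in> graph_edges Rpos \<Phi> \<longleftrightarrow>
     a \<in> \<Phi> \<and> b \<in> \<Phi> \<and> (a - b \<in> Rpos - \<Phi> \<or> b - a \<in> Rpos - \<Phi>)"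
proof -
  have "a - b \<in> uminus ` S \<longleftrightarrow> b - a \<in> S" for S
    by (metis image_iff minus_diff_eq minus_minus)
  then show ?thesis
    unfolding graph_edges_def by blast
qed

lemma graph_edges_translate:
  "(u, v) \<in> graph_edges Rpos \<Phi> \<Longrightarrow> u + w \<in> \<Phi> \<Longrightarrow> v + w \<in> \<Phi> \<Longrightarrow>
     (u + w, v + w) \<in> graph_edges Rpos \<Phi>"
  by (simp add: graph_edges_iff)

lemma sym_graph_edges: "sym (graph_edges Rpos \<Phi>)"
  by (auto simp: sym_def graph_edges_iff)

lemma graph_components_eq_Image:
  assumes "X \<in> graph_components Rpos \<Phi>" and "u \<in> X"
  shows "X = (graph_edges Rpos \<Phi>)\<^sup>* `` {u}"
proof -
  let ?E = "graph_edges Rpos \<Phi>"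
  obtain a where X: "X = ?E\<^sup>* `` {a}"
    using assms(1) unfolding graph_components_def by blast
  then have "(a, u) \<in> ?E\<^sup>*" and "(u, a) \<in> ?E\<^sup>*"
    using assms(2) sym_rtrancl[OF sym_graph_edges] by (auto dest: symD)
  then show ?thesis
    unfolding X by (blast intro: rtrancl_trans)
qed

lemma graph_component_mem_iff:
  "X \<in> graph_components Rpos \<Phi> \<Longrightarrow> u \<in> X \<Longrightarrow> v \<in> X \<longleftrightarrow> (u, v) \<in> (graph_edges Rpos \<Phi>)\<^sup>*"
  using graph_components_eq_Image by fastforce

lemma graph_components_edge_eq:
  assumes "X \<in> graph_components Rpos \<Phi>" "Y \<in> graph_components Rpos \<Phi>"
    and "u \<in> X" "v \<in> Y" "(u, v) \<in> graph_edges Rpos \<Phi>"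
  shows "X = Y"
proof -
  have "v \<in> X"
    using assms(1,3,5) graph_component_mem_iff by blast
  then show ?thesis
    using assms(1,2,4) graph_components_eq_Image by metis
qed

lemma graph_components_subset: "X \<in> graph_components Rpos \<Phi> \<Longrightarrow> X \<subseteq> \<Phi>"
proof -
  have "(a, b) \<in> (graph_edges Rpos \<Phi>)\<^sup>* \<Longrightarrow> a \<in> \<Phi> \<Longrightarrow> b \<in> \<Phi>" for a b
    by (induction rule: rtrancl_induct) (auto simp: graph_edges_iff)
  then show "X \<in> graph_components Rpos \<Phi> \<Longrightarrow> X \<subseteq> \<Phi>"
    unfolding graph_components_def by blast
qed

lemma graph_components_nonempty: "X \<in> graph_components Rpos \<Phi> \<Longrightarrow> X \<noteq> {}"
  unfolding graph_components_def by blast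

lemma comp_add_SomeD:
  assumes "comp_add R Rpos \<Phi> A C = Some D"
  shows "D \<in> graph_components Rpos \<Phi>" and "\<exists>a\<in>A. \<exists>c\<in>C. a + c \<in> D"
proof -
  define Z where "Z = {\<alpha> + \<beta> | \<alpha> \<beta>. \<alpha> \<in> A \<and> \<beta> \<in> C} \<inter> R"
  define K where "K = {X \<in> graph_components Rpos \<Phi>. Z \<inter> X \<noteq> {}}"
  have "D \<in> K"
  proof (cases "\<exists>X. K = {X}")
    case True
    then show ?thesis
      using assms unfolding comp_add_def Let_def Z_def[symmetric] K_def[symmetric]
      by (auto split: if_splits)
  next
    case False
    then obtain X where "X \<noteq> A" "K = {A, X}" "D = (THE X. X \<noteq> A \<and> K = {A, X})"
      using assms unfolding comp_add_def Let_def Z_def[symmetric] K_def[symmetric]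
      by (auto split: if_splits)
    moreover have "(THE X. X \<noteq> A \<and> K = {A, X}) = X"
      using calculation by (intro the_equality) (auto simp: doubleton_eq_iff)
    ultimately show ?thesis by simp
  qed
  then show "D \<in> graph_components Rpos \<Phi>" and "\<exists>a\<in>A. \<exists>c\<in>C. a + c \<in> D"
    unfolding K_def Z_def by blast+
qed

lemma std_sum_append:
  "std_sum R Rpos \<Phi> A (Cs @ Ds) =
     (case std_sum R Rpos \<Phi> A Cs of None \<Rightarrow> None | Some B \<Rightarrow> std_sum R Rpos \<Phi> B Ds)"
  by (induction Cs arbitrary: A) (auto split: option.split)

section \<open>Root sets with a height function\<close>

locale root_height_system =
  fixes R Rpos :: "'a::real_inner set" and height :: "'a \<Rightarrow> real"
  assumes finite_roots: "finite R"
    and zero_notin_roots: "0 \<notin> R"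
    and uminus_root: "x \<in> R \<Longrightarrow> - x \<in> R"
    and obtuse_add_root: "x \<in> R \<Longrightarrow> y \<in> R \<Longrightarrow> x \<noteq> - y \<Longrightarrow> x \<bullet> y < 0 \<Longrightarrow> x + y \<in> R"
    and pos_subset_roots: "Rpos \<subseteq> R"
    and root_pos_or_neg: "x \<in> R \<Longrightarrow> x \<in> Rpos \<or> - x \<in> Rpos"
    and pos_add: "x \<in> Rpos \<Longrightarrow> y \<in> Rpos \<Longrightarrow> x + y \<in> R \<Longrightarrow> x + y \<in> Rpos"
    and height_add: "height (x + y) = height x + height y"
    and height_pos: "x \<in> Rpos \<Longrightarrow> height x > 0"
begin

lemma pos_add_nonzero: "x \<in> Rpos \<Longrightarrow> y \<in> Rpos \<Longrightarrow> x + y \<noteq> 0"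
  using height_add[of x y] height_add[of 0 0] height_pos[of x] height_pos[of y] by auto

lemma inner_nonneg_if_add_notin_roots:
  "x \<in> R \<Longrightarrow> y \<in> R \<Longrightarrow> x + y \<noteq> 0 \<Longrightarrow> x + y \<notin> R \<Longrightarrow> x \<bullet> y \<ge> 0"
  using obtuse_add_root by (metis eq_neg_iff_add_eq_0 not_le)

lemma root_triple_add_eq_0:
  assumes "p \<in> R" "q \<in> R" "r \<in> R" "p + q + r \<in> R"
    and "p + r \<notin> R" "p + r \<noteq> 0" "q + r \<notin> R" "q + r \<noteq> 0"
  shows "p + q = 0"
proof -
  have "p \<bullet> r \<ge> 0" "q \<bullet> r \<ge> 0"
    using assms inner_nonneg_if_add_notin_roots by auto
  moreover have "(p + q + r) \<bullet> (- p) \<ge> 0"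
    using inner_nonneg_if_add_notin_roots[of "p + q + r" "- p"] assms uminus_root
    by (simp add: add.commute add.left_commute)
  moreover have "(p + q + r) \<bullet> (- q) \<ge> 0"
    using inner_nonneg_if_add_notin_roots[of "p + q + r" "- q"] assms uminus_root
    by (simp add: add.commute add.left_commute)
  \<comment> \<open>the four inner products add up to \<open>- (p + q) \<bullet> (p + q)\<close>\<close>
  ultimately have "(p + q) \<bullet> (p + q) \<le> 0"
    by (simp add: algebra_simps inner_commute)
  then show ?thesis
    by (metis antisym inner_ge_zero inner_eq_zero_iff)
qed

end

locale root_height_closed_subset = root_height_system +
  fixes \<Phi> :: "'a::real_inner set"
  assumes phi_subset_pos: "\<Phi> \<subseteq> Rpos"
    and phi_closed: "closed_in_rs R \<Phi>"
begin

abbreviation "edges \<equiv> graph_edges Rpos \<Phi>"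
abbreviation "comps \<equiv> graph_components Rpos \<Phi>"

lemma edge_add_or_shift:
  assumes xy: "(x, y) \<in> edges" and b: "b \<in> \<Phi>" and yb: "y + b \<in> \<Phi>"
    and not_xyb: "(x, y + b) \<notin> edges"
  shows "x + b \<in> R \<or> b + (y - x) \<in> \<Phi>"
  \<comment> \<open>otherwise \<open>root_triple_add_eq_0\<close> applies to \<open>x\<close>, \<open>y - x\<close>, \<open>b\<close> and forces \<open>y = 0\<close>\<close>
proof (rule ccontr)
  assume "\<not> ?thesis"
  then have xb: "x + b \<notin> R" and shift: "b + (y - x) \<notin> \<Phi>"
    by auto
  have x: "x \<in> \<Phi>" and y: "y \<in> \<Phi>" and diff: "x - y \<in> Rpos - \<Phi> \<or> y - x \<in> Rpos - \<Phi>"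
    using xy by (auto simp: graph_edges_iff)
  have pos: "x \<in> Rpos" "y \<in> Rpos" "b \<in> Rpos" "y + b \<in> Rpos"
    using x y b yb phi_subset_pos by auto
  have not_pos_neg: "u \<in> Rpos \<Longrightarrow> - u \<notin> Rpos" for u
    using pos_add_nonzero by fastforce
  have yx: "y - x \<in> R"
    using diff pos_subset_roots uminus_root by (metis Diff_iff minus_diff_eq subsetD)
  define d where "d = (y + b) - x"
  have d_notin: "d \<notin> Rpos - \<Phi>" "- d \<notin> Rpos - \<Phi>"
    using not_xyb x yb by (auto simp: graph_edges_iff d_def)
  have "d \<noteq> 0"
  proof
    assume "d = 0"
    then have "x - y = b"
      by (simp add: d_def algebra_simps)
    then show False
      using diff b pos(3) not_pos_neg by (metis Diff_iff minus_diff_eq)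
  qed
  have "d \<notin> R"
  proof
    assume "d \<in> R"
    have "d \<notin> \<Phi>"
      using shift by (simp add: d_def algebra_simps)
    then have "- d \<in> \<Phi>"
      using root_pos_or_neg[OF \<open>d \<in> R\<close>] d_notin by blast
    moreover have "- d + b = x - y"
      by (simp add: d_def algebra_simps)
    ultimately have "x - y \<in> \<Phi>"
      using phi_closed b yx uminus_root unfolding closed_in_rs_def by (metis minus_diff_eq)
    then show False
      using diff phi_subset_pos not_pos_neg by (metis Diff_iff minus_diff_eq subsetD)
  qed
  have "x + (y - x) = 0"
  proof (rule root_triple_add_eq_0)
    show "x + (y - x) + b \<in> R" "x + b \<notin> R" "x + b \<noteq> 0"
      using pos pos_subset_roots xb pos_add_nonzero by (auto simp: algebra_simps)
    show "y - x + b \<notin> R" "y - x + b \<noteq> 0"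
      using \<open>d \<notin> R\<close> \<open>d \<noteq> 0\<close> by (simp_all add: d_def algebra_simps)
  qed (use pos pos_subset_roots yx in auto)
  then show False
    using y phi_subset_pos pos_subset_roots zero_notin_roots by auto
qed

lemma exists_summand_in_sum_component:
  assumes A: "A \<in> comps" and C: "C \<in> comps" and D: "D \<in> comps" and "D \<noteq> A"
    and a0: "a0 \<in> A" and "c0 \<in> C" and "a0 + c0 \<in> D" and a: "a \<in> A"
  shows "\<exists>c\<in>C. a + c \<in> D"
proof -
  have "(a0, a) \<in> edges\<^sup>*"
    using graph_component_mem_iff[OF A a0] a by blast
  then show ?thesis
  proof (induction rule: rtrancl_induct)
    case base
    then show ?case
      using assms by blast
  next
    case (step y z)
    from step.IH obtain c where c: "c \<in> C" "y + c \<in> D"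
      by blast
    have "y \<in> A" "z \<in> A"
      using graph_component_mem_iff[OF A a0] step.hyps by (auto intro: rtrancl_into_rtrancl)
    have "c \<in> \<Phi>" "y + c \<in> \<Phi>" "z \<in> \<Phi>"
      using graph_components_subset C D A c \<open>z \<in> A\<close> by blast+
    have "(z, y + c) \<notin> edges"
      using graph_components_edge_eq[OF A D \<open>z \<in> A\<close> c(2)] \<open>D \<noteq> A\<close> by blast
    moreover have "(z, y) \<in> edges"
      using step.hyps(2) sym_graph_edges by (auto dest: symD)
    ultimately have "z + c \<in> R \<or> c + (y - z) \<in> \<Phi>"
      using edge_add_or_shift \<open>c \<in> \<Phi>\<close> \<open>y + c \<in> \<Phi>\<close> by blast
    then show ?case
    proof
      assume "z + c \<in> R"
      then have "z + c \<in> \<Phi>"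
        using phi_closed \<open>z \<in> \<Phi>\<close> \<open>c \<in> \<Phi>\<close> unfolding closed_in_rs_def by blast
      then have "(y + c, z + c) \<in> edges"
        using graph_edges_translate[OF step.hyps(2)] \<open>y + c \<in> \<Phi>\<close> by blast
      then show ?thesis
        using graph_component_mem_iff[OF D c(2)] c(1) by blast
    next
      assume shift: "c + (y - z) \<in> \<Phi>"
      have "z + (c - z) = c" "y + (c - z) = c + (y - z)"
        by (simp_all add: algebra_simps)
      then have "(c, c + (y - z)) \<in> edges"
        using graph_edges_translate[OF \<open>(z, y) \<in> edges\<close>, of "c - z"] \<open>c \<in> \<Phi>\<close> shift
        by metis
      then have "c + (y - z) \<in> C"
        using graph_component_mem_iff[OF C c(1)] by blast
      moreover have "z + (c + (y - z)) = y + c"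
        by (simp add: algebra_simps)
      ultimately show ?thesis
        using c(2) by metis
    qed
  qed
qed

definition max_height :: "'a set \<Rightarrow> real" where
  "max_height X = Max (height ` X)"

lemma max_height_comp_add_less:
  assumes A: "A \<in> comps" and C: "C \<in> comps"
    and sum: "comp_add R Rpos \<Phi> A C = Some D" and "D \<noteq> A"
  shows "max_height A < max_height D"
proof -
  have finite_comp: "finite X" if "X \<in> comps" for X
    using graph_components_subset[OF that] phi_subset_pos pos_subset_roots finite_roots
    by (meson finite_subset subset_trans)
  have D: "D \<in> comps" and "\<exists>a\<in>A. \<exists>c\<in>C. a + c \<in> D"
    using comp_add_SomeD[OF sum] by blast+
  moreover have "max_height A \<in> height ` A"
    unfolding max_height_def using finite_comp[OF A] graph_components_nonempty[OF A] by simp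
  then obtain a where a: "a \<in> A" "height a = max_height A"
    by auto
  ultimately obtain c where c: "c \<in> C" "a + c \<in> D"
    using exists_summand_in_sum_component[OF A C D \<open>D \<noteq> A\<close>] by blast
  have "max_height A < height (a + c)"
    using a c(1) height_add height_pos graph_components_subset[OF C] phi_subset_pos by auto
  also have "\<dots> \<le> max_height D"
    unfolding max_height_def using finite_comp[OF D] c(2) by simp
  finally show ?thesis .
qed

lemma std_sum_max_height:
  "A \<in> comps \<Longrightarrow> set Cs \<subseteq> comps \<Longrightarrow> std_sum R Rpos \<Phi> A Cs = Some B \<Longrightarrow>
     B \<in> comps \<and> (B = A \<or> max_height A < max_height B)"
proof (induction Cs arbitrary: A)
  case Nil
  then show ?case
    by simp
next
  case (Cons C Cs)
  then obtain A' where sum: "comp_add R Rpos \<Phi> A C = Some A'"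
    and rest: "std_sum R Rpos \<Phi> A' Cs = Some B"
    by (auto split: option.splits)
  have "A' \<in> comps"
    using comp_add_SomeD(1)[OF sum] .
  then have "B \<in> comps \<and> (B = A' \<or> max_height A' < max_height B)"
    using Cons.IH rest Cons.prems(2) by simp
  moreover have "A' = A \<or> max_height A < max_height A'"
    using max_height_comp_add_less[OF _ _ sum] Cons.prems by auto
  ultimately show ?case
    by auto
qed

theorem partial_order_comp_le: "partial_order_on comps (comp_le R Rpos \<Phi>)"
  unfolding partial_order_on_def preorder_on_def
proof (intro conjI)
  show "comp_le R Rpos \<Phi> \<subseteq> comps \<times> comps"
    unfolding comp_le_def by auto
  show "refl_on comps (comp_le R Rpos \<Phi>)"
    unfolding refl_on_def comp_le_def by (auto intro!: exI[of _ "[]"])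
  show "trans (comp_le R Rpos \<Phi>)"
  proof (rule transI)
    fix A B D
    assume "(A, B) \<in> comp_le R Rpos \<Phi>" "(B, D) \<in> comp_le R Rpos \<Phi>"
    then obtain Cs Cs' where "A \<in> comps" "D \<in> comps" "set (Cs @ Cs') \<subseteq> comps"
      and "std_sum R Rpos \<Phi> A (Cs @ Cs') = Some D"
      unfolding comp_le_def by (auto simp: std_sum_append)
    then show "(A, D) \<in> comp_le R Rpos \<Phi>"
      unfolding comp_le_def by blast
  qed
  show "antisym (comp_le R Rpos \<Phi>)"
  proof (rule antisymI)
    fix A B
    assume "(A, B) \<in> comp_le R Rpos \<Phi>" "(B, A) \<in> comp_le R Rpos \<Phi>"
    then have "A = B \<or> max_height A < max_height B" "B = A \<or> max_height B < max_height A"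
      unfolding comp_le_def using std_sum_max_height by blast+
    then show "A = B"
      by auto
  qed
qed

end

lemma qproj_eq:
  fixes J :: "'a::euclidean_space set"
  assumes "v - w \<in> span J" and "\<forall>j\<in>J. w \<bullet> j = 0"
  shows "qproj J v = w"
  unfolding qproj_def
proof (rule the_equality)
  fix w'
  assume w': "v - w' \<in> span J \<and> (\<forall>j\<in>J. w' \<bullet> j = 0)"
  have "w - w' \<in> span J"
    using span_diff[of "v - w'" J "v - w"] w' assms(1) by (simp add: algebra_simps)
  moreover have "\<forall>j\<in>J. (w - w') \<bullet> j = 0"
    using w' assms(2) by (simp add: inner_diff_left)
  ultimately have "(w - w') \<bullet> (w - w') = 0"
    using orthogonal_to_span unfolding orthogonal_def by (metis inner_commute)
  then show "w' = w"
    by simp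
qed (use assms in blast)

lemma
  fixes J :: "'a::euclidean_space set"
  shows diff_qproj_in_span: "v - qproj J v \<in> span J"
    and qproj_orthogonal: "j \<in> J \<Longrightarrow> qproj J v \<bullet> j = 0"
proof -
  obtain y z where "y \<in> span J" "\<And>w. w \<in> span J \<Longrightarrow> orthogonal z w" "v = y + z"
    using orthogonal_subspace_decomp_exists[of J v] by blast
  then have "v - z \<in> span J" "\<forall>j\<in>J. z \<bullet> j = 0"
    using span_base unfolding orthogonal_def by auto
  then have "qproj J v = z"
    by (rule qproj_eq)
  then show "v - qproj J v \<in> span J" "j \<in> J \<Longrightarrow> qproj J v \<bullet> j = 0"
    using \<open>v - z \<in> span J\<close> \<open>\<forall>j\<in>J. z \<bullet> j = 0\<close> by auto
qed

lemma qproj_inner_span: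
  fixes J :: "'a::euclidean_space set"
  shows "u \<in> span J \<Longrightarrow> qproj J v \<bullet> u = 0"
  using orthogonal_to_span[of u J "qproj J v"] qproj_orthogonal unfolding orthogonal_def by blast

lemma qproj_span_eq_0:
  fixes J :: "'a::euclidean_space set"
  shows "u \<in> span J \<Longrightarrow> qproj J u = 0"
  by (rule qproj_eq) simp_all

lemma linear_qproj:
  fixes J :: "'a::euclidean_space set"
  shows "linear (qproj J)"
proof (rule linearI)
  fix x y
  have "(x - qproj J x) + (y - qproj J y) \<in> span J"
    by (intro span_add diff_qproj_in_span)
  then show "qproj J (x + y) = qproj J x + qproj J y"
    by (intro qproj_eq) (auto simp: algebra_simps inner_add_left qproj_orthogonal)
next
  fix c :: real and x
  have "c *\<^sub>R (x - qproj J x) \<in> span J"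
    by (intro span_mul diff_qproj_in_span)
  then show "qproj J (c *\<^sub>R x) = c *\<^sub>R qproj J x"
    by (intro qproj_eq) (auto simp: algebra_simps qproj_orthogonal)
qed

definition reflection :: "'a::real_inner \<Rightarrow> 'a \<Rightarrow> 'a" where
  "reflection j z = z - (2 * (z \<bullet> j) / (j \<bullet> j)) *\<^sub>R j"

lemma reflection_reflection: "j \<noteq> 0 \<Longrightarrow> reflection j (reflection j z) = z"
  by (simp add: reflection_def inner_diff_left)

lemma linear_reflection: "linear (reflection j)"
  by (rule linearI) (simp_all add: reflection_def inner_add_left add_divide_distrib algebra_simps)

lemma root_system_reflection:
  "root_system \<Delta> \<Longrightarrow> j \<in> \<Delta> \<Longrightarrow> z \<in> \<Delta> \<Longrightarrow> reflection j z \<in> \<Delta>"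
  unfolding root_system_def reflection_def by blast

lemma root_system_nonzero: "root_system \<Delta> \<Longrightarrow> a \<in> \<Delta> \<Longrightarrow> a \<noteq> 0"
  unfolding root_system_def by blast

lemma root_system_uminus:
  assumes "root_system \<Delta>" and "a \<in> \<Delta>"
  shows "- a \<in> \<Delta>"
proof -
  have "reflection a a = - a"
    using root_system_nonzero[OF assms] by (simp add: reflection_def scaleR_2)
  then show ?thesis
    using root_system_reflection[OF assms(1,2,2)] by simp
qed

lemma Ints_negative_cases:
  fixes m :: real
  assumes "m \<in> \<int>" and "m < 0"
  shows "m = -1 \<or> m \<le> -2"
proof -
  obtain k where "m = of_int k"
    using assms(1) by (rule Ints_cases)
  moreover have "k = -1 \<or> k \<le> -2"
    using assms(2) calculation by linarith
  ultimately show ?thesis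
    by auto
qed

lemma root_system_obtuse_add:
  fixes \<Delta> :: "'a::euclidean_space set"
  assumes rs: "root_system \<Delta>" and a: "a \<in> \<Delta>" and b: "b \<in> \<Delta>"
    and "a \<noteq> - b" and obtuse: "a \<bullet> b < 0"
  shows "a + b \<in> \<Delta>"
proof -
  define m where "m = 2 * (b \<bullet> a) / (a \<bullet> a)"
  define n where "n = 2 * (a \<bullet> b) / (b \<bullet> b)"
  have aa: "a \<bullet> a > 0" and bb: "b \<bullet> b > 0"
    using root_system_nonzero rs a b by auto
  have "m \<in> \<int>" "n \<in> \<int>"
    using rs a b unfolding root_system_def m_def n_def by blast+
  moreover have "m < 0" "n < 0"
    using obtuse aa bb by (simp_all add: m_def n_def inner_commute divide_neg_pos)
  ultimately have "m = -1 \<or> n = -1 \<or> (m \<le> -2 \<and> n \<le> -2)"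
    using Ints_negative_cases by blast
  then show ?thesis
  proof (elim disjE)
    assume "m = -1"
    then show ?thesis
      using root_system_reflection[OF rs a b] by (simp add: reflection_def m_def add.commute)
  next
    assume "n = -1"
    then show ?thesis
      using root_system_reflection[OF rs b a] by (simp add: reflection_def n_def)
  next
    assume "m \<le> -2 \<and> n \<le> -2"
    then have "a \<bullet> a \<le> - (a \<bullet> b)" "b \<bullet> b \<le> - (a \<bullet> b)"
      using aa bb by (simp_all add: m_def n_def field_simps inner_commute)
    then have "(a + b) \<bullet> (a + b) \<le> 0"
      by (simp add: algebra_simps inner_commute)
    then have "a + b = 0"
      by (metis antisym inner_ge_zero inner_eq_zero_iff)
    then show ?thesis
      using \<open>a \<noteq> - b\<close> by (simp add: eq_neg_iff_add_eq_0)
  qed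
qed

lemma nonneg_int_comb_add:
  assumes "nonneg_int_comb B u" and "nonneg_int_comb B v"
  shows "nonneg_int_comb B (u + v)"
proof -
  obtain c d where "\<forall>b\<in>B. c b \<in> \<int> \<and> c b \<ge> 0" "u = (\<Sum>b\<in>B. c b *\<^sub>R b)"
    and "\<forall>b\<in>B. d b \<in> \<int> \<and> d b \<ge> 0" "v = (\<Sum>b\<in>B. d b *\<^sub>R b)"
    using assms unfolding nonneg_int_comb_def by blast
  then show ?thesis
    unfolding nonneg_int_comb_def
    by (intro exI[of _ "\<lambda>b. c b + d b"]) (auto simp: sum.distrib scaleR_add_left)
qed

lemma nonneg_int_comb_mono:
  assumes "finite T" and "S \<subseteq> T" and "nonneg_int_comb S v"
  shows "nonneg_int_comb T v"
proof -
  obtain c where c: "\<forall>b\<in>S. c b \<in> \<int> \<and> c b \<ge> 0" "v = (\<Sum>b\<in>S. c b *\<^sub>R b)"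
    using assms(3) unfolding nonneg_int_comb_def by blast
  define c' where "c' b = (if b \<in> S then c b else 0)" for b
  have "(\<Sum>b\<in>T. c' b *\<^sub>R b) = (\<Sum>b\<in>S. c' b *\<^sub>R b)"
    using assms(1,2) by (intro sum.mono_neutral_right) (auto simp: c'_def)
  also have "\<dots> = v"
    unfolding c(2) c'_def by simp
  finally show ?thesis
    unfolding nonneg_int_comb_def using c(1) by (intro exI[of _ c']) (auto simp: c'_def)
qed

lemma nonneg_int_comb_remove_zero:
  assumes "finite S" and "nonneg_int_comb S v"
  shows "nonneg_int_comb (S - {0}) v"
  using assms unfolding nonneg_int_comb_def by (auto simp: sum_diff1)

lemma nonneg_int_comb_linear_image:
  assumes "finite S" and "linear f" and "nonneg_int_comb S v"
  shows "nonneg_int_comb (f ` S) (f v)"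
proof -
  obtain c where c: "\<forall>b\<in>S. c b \<in> \<int> \<and> c b \<ge> 0" "v = (\<Sum>b\<in>S. c b *\<^sub>R b)"
    using assms(3) unfolding nonneg_int_comb_def by blast
  define c' where "c' u = (\<Sum>b \<in> {b \<in> S. f b = u}. c b)" for u
  have "f v = (\<Sum>b\<in>S. c b *\<^sub>R f b)"
    unfolding c(2) using assms(2) by (simp add: linear_sum linear_cmul)
  also have "\<dots> = (\<Sum>u\<in>f ` S. \<Sum>b \<in> {b \<in> S. f b = u}. c b *\<^sub>R f b)"
    using assms(1) by (rule sum.image_gen)
  also have "\<dots> = (\<Sum>u\<in>f ` S. c' u *\<^sub>R u)"
    unfolding c'_def scaleR_sum_left by (intro sum.cong) auto
  finally show ?thesis
    unfolding nonneg_int_comb_def using c(1)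
    by (intro exI[of _ c']) (auto simp: c'_def intro: Ints_sum sum_nonneg)
qed

lemma nonneg_int_comb_pos:
  fixes h :: "'a::real_vector \<Rightarrow> real"
  assumes "finite B" and "linear h" and "\<And>b. b \<in> B \<Longrightarrow> h b = 1"
    and "nonneg_int_comb B v" and "v \<noteq> 0"
  shows "h v > 0"
proof -
  obtain c where c: "\<forall>b\<in>B. c b \<in> \<int> \<and> c b \<ge> 0" "v = (\<Sum>b\<in>B. c b *\<^sub>R b)"
    using assms(4) unfolding nonneg_int_comb_def by blast
  have hv: "h v = (\<Sum>b\<in>B. c b)"
    unfolding c(2) using assms(2,3) by (simp add: linear_sum linear_cmul)
  have "(\<Sum>b\<in>B. c b) \<noteq> 0"
  proof
    assume "(\<Sum>b\<in>B. c b) = 0"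
    then have "\<forall>b\<in>B. c b = 0"
      using sum_nonneg_eq_0_iff[OF assms(1)] c(1) by blast
    then show False
      using c(2) \<open>v \<noteq> 0\<close> by simp
  qed
  moreover have "(\<Sum>b\<in>B. c b) \<ge> 0"
    using c(1) by (simp add: sum_nonneg)
  ultimately show ?thesis
    unfolding hv by linarith
qed

section \<open>Quotient root systems\<close>

lemma sum_qproj_fiber_eq_0:
  fixes \<Delta> J :: "'a::euclidean_space set"
  assumes rs: "root_system \<Delta>" and "J \<subseteq> \<Delta>"
  shows "(\<Sum>z\<in>{z \<in> \<Delta>. qproj J z = y}. z - y) = 0"
proof -
  define F where "F = {z \<in> \<Delta>. qproj J z = y}"
  have "finite F"
    using rs unfolding root_system_def F_def by simp
  have sum_orthogonal: "(\<Sum>F) \<bullet> j = 0" if j: "j \<in> J" for j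
  proof -
    have "j \<noteq> 0"
      using root_system_nonzero rs j \<open>J \<subseteq> \<Delta>\<close> by blast
    have "qproj J (reflection j z) = qproj J z" for z
      using qproj_span_eq_0[OF span_base[OF j]]
      by (simp add: reflection_def linear_diff[OF linear_qproj[of J]] linear_cmul[OF linear_qproj[of J]])
    moreover have "j \<in> \<Delta>"
      using j \<open>J \<subseteq> \<Delta>\<close> by blast
    ultimately have into: "reflection j z \<in> F" if "z \<in> F" for z
      using that root_system_reflection[OF rs] unfolding F_def by simp
    then have "reflection j ` F = F"
      using reflection_reflection[OF \<open>j \<noteq> 0\<close>] by (metis image_eqI image_subsetI subsetI subset_antisym)
    moreover have "inj_on (reflection j) F"
      using reflection_reflection[OF \<open>j \<noteq> 0\<close>] by (metis inj_on_inverseI)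
    ultimately have "\<Sum>F = (\<Sum>z\<in>F. reflection j z)"
      using sum.reindex[of "reflection j" F id] by simp
    also have "\<dots> = reflection j (\<Sum>F)"
      using linear_sum[OF linear_reflection] by (metis id_apply sum.cong)
    finally show ?thesis
      using \<open>j \<noteq> 0\<close> by (simp add: reflection_def)
  qed
  define T where "T = (\<Sum>z\<in>F. z - y)"
  have T_span: "T \<in> span J"
    unfolding T_def F_def using diff_qproj_in_span by (auto intro: span_sum)
  moreover have "T \<bullet> j = 0" if "j \<in> J" for j
  proof -
    have "T \<bullet> j = (\<Sum>z\<in>F. z \<bullet> j)"
      unfolding T_def F_def using qproj_orthogonal[OF that]
      by (auto simp: inner_sum_left inner_diff_left intro: sum.cong)
    then show ?thesis
      using sum_orthogonal[OF that] by (simp add: inner_sum_left)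
  qed
  ultimately have "T = qproj J T"
    by (intro qproj_eq[symmetric]) (simp_all add: span_zero)
  also have "\<dots> = 0"
    using T_span by (rule qproj_span_eq_0)
  finally show ?thesis
    unfolding T_def F_def .
qed

lemma qrs_roots_obtuse_add:
  fixes \<Delta> J :: "'a::euclidean_space set"
  assumes rs: "root_system \<Delta>" and "J \<subseteq> \<Delta>"
    and x: "x \<in> qrs_roots \<Delta> J" and y: "y \<in> qrs_roots \<Delta> J"
    and "x \<noteq> - y" and obtuse: "x \<bullet> y < 0"
  shows "x + y \<in> qrs_roots \<Delta> J"
proof -
  obtain x' y' where x': "x' \<in> \<Delta>" "qproj J x' = x" and y': "y' \<in> \<Delta>" "qproj J y' = y"
    using x y unfolding qrs_roots_def by blast
  define F where "F = {z \<in> \<Delta>. qproj J z = y}"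
  define p where "p = x' - x"
  have p_span: "p \<in> span J"
    using diff_qproj_in_span x'(2) unfolding p_def by blast
  have "finite F" "y' \<in> F"
    using rs y' unfolding root_system_def F_def by auto
  moreover have "(\<Sum>z\<in>F. p \<bullet> (z - y)) = 0"
    using sum_qproj_fiber_eq_0[OF rs \<open>J \<subseteq> \<Delta>\<close>]
    unfolding F_def by (simp add: inner_sum_right[symmetric])
  ultimately obtain z where z: "z \<in> F" "p \<bullet> (z - y) \<le> 0"
    using sum_pos[of F "\<lambda>z. p \<bullet> (z - y)"] by (metis empty_iff less_irrefl not_le)
  have "x \<bullet> (z - y) = 0"
    using qproj_inner_span diff_qproj_in_span z(1) x'(2) unfolding F_def by fastforce
  moreover have "p \<bullet> y = 0"
    using qproj_inner_span[OF p_span, of y'] y'(2) by (simp add: inner_commute)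
  moreover have "x' \<bullet> z = x \<bullet> y + x \<bullet> (z - y) + p \<bullet> y + p \<bullet> (z - y)"
    unfolding p_def by (simp add: algebra_simps)
  ultimately have "x' \<bullet> z < 0"
    using obtuse z(2) by linarith
  have qz: "qproj J z = y" "z \<in> \<Delta>"
    using z(1) unfolding F_def by auto
  have "x' \<noteq> - z"
    using \<open>x \<noteq> - y\<close> x'(2) qz linear_neg[OF linear_qproj[of J]] by force
  then have "x' + z \<in> \<Delta>"
    using root_system_obtuse_add[OF rs x'(1) qz(2)] \<open>x' \<bullet> z < 0\<close> by blast
  moreover have "qproj J (x' + z) = x + y"
    using linear_add[OF linear_qproj[of J]] x'(2) qz(1) by simp
  moreover have "x + y \<noteq> 0"
    using \<open>x \<noteq> - y\<close> by (simp add: eq_neg_iff_add_eq_0)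
  ultimately show ?thesis
    unfolding qrs_roots_def by (metis DiffI image_eqI singletonD)
qed

lemma qrs_roots_uminus:
  fixes \<Delta> J :: "'a::euclidean_space set"
  assumes "root_system \<Delta>" and "x \<in> qrs_roots \<Delta> J"
  shows "- x \<in> qrs_roots \<Delta> J"
proof -
  obtain b where "b \<in> \<Delta>" "x = qproj J b" "x \<noteq> 0"
    using assms(2) unfolding qrs_roots_def by blast
  moreover have "qproj J (- b) = - qproj J b"
    using linear_neg[OF linear_qproj] by blast
  ultimately show ?thesis
    using root_system_uminus[OF assms(1)] unfolding qrs_roots_def by force
qed

lemma qrs_base_nonneg_int_comb:
  fixes \<Sigma> J :: "'a::euclidean_space set"
  assumes "finite \<Sigma>" and "nonneg_int_comb \<Sigma> v"
  shows "nonneg_int_comb (qrs_base \<Sigma> J) (qproj J v)"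
proof (rule nonneg_int_comb_mono)
  show "finite (qrs_base \<Sigma> J)"
    unfolding qrs_base_def using assms(1) by simp
  show "nonneg_int_comb (qproj J ` \<Sigma> - {0}) (qproj J v)"
    using assms by (intro nonneg_int_comb_remove_zero nonneg_int_comb_linear_image linear_qproj) auto
  show "qproj J ` \<Sigma> - {0} \<subseteq> qrs_base \<Sigma> J"
  proof
    fix u
    assume "u \<in> qproj J ` \<Sigma> - {0}"
    then obtain s where "s \<in> \<Sigma>" "u = qproj J s" "u \<noteq> 0"
      by blast
    moreover have "s \<notin> J"
      using calculation qproj_span_eq_0[OF span_base] by blast
    ultimately show "u \<in> qrs_base \<Sigma> J"
      unfolding qrs_base_def by blast
  qed
qed

lemma qrs_root_pos_or_neg:
  fixes \<Delta> \<Sigma> J :: "'a::euclidean_space set"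
  assumes "root_system \<Delta>" and "is_base \<Delta> \<Sigma>" and x: "x \<in> qrs_roots \<Delta> J"
  shows "x \<in> qrs_pos \<Delta> \<Sigma> J \<or> - x \<in> qrs_pos \<Delta> \<Sigma> J"
proof -
  obtain b where "b \<in> \<Delta>" "x = qproj J b"
    using x unfolding qrs_roots_def by blast
  moreover have "finite \<Sigma>"
    using assms(2) unfolding is_base_def by (metis independent_bound)
  moreover have "qproj J (- b) = - qproj J b"
    using linear_neg[OF linear_qproj] by blast
  ultimately have "nonneg_int_comb (qrs_base \<Sigma> J) x \<or> nonneg_int_comb (qrs_base \<Sigma> J) (- x)"
    using assms(2) qrs_base_nonneg_int_comb unfolding is_base_def by metis
  then show ?thesis
    using x qrs_roots_uminus[OF assms(1) x] unfolding qrs_pos_def by blast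
qed

lemma qrs_height_exists:
  fixes \<Delta> \<Sigma> J :: "'a::euclidean_space set"
  assumes base: "is_base \<Delta> \<Sigma>" and "J \<subseteq> \<Sigma>"
  obtains h :: "'a \<Rightarrow> real" where "linear h" and "\<And>x. x \<in> qrs_pos \<Delta> \<Sigma> J \<Longrightarrow> h x > 0"
proof -
  have "independent \<Sigma>"
    using base unfolding is_base_def by blast
  obtain h :: "'a \<Rightarrow> real" where h: "linear h" "\<forall>s\<in>\<Sigma>. h s = (if s \<in> J then 0 else 1)"
    using linear_independent_extend[OF \<open>independent \<Sigma>\<close>, of "\<lambda>s. if s \<in> J then 0 else 1"]
    by blast
  have h_span: "h u = 0" if "u \<in> span J" for u
  proof (rule real_vector.linear_eq_0_on_span[OF h(1) _ that])
    show "h j = 0" if "j \<in> J" for j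
      using that h(2) \<open>J \<subseteq> \<Sigma>\<close> by auto
  qed
  have "h b = 1" if b: "b \<in> qrs_base \<Sigma> J" for b
  proof -
    obtain s where s: "s \<in> \<Sigma> - J" "b = qproj J s"
      using b unfolding qrs_base_def by blast
    have "h s = h (s - qproj J s) + h (qproj J s)"
      using linear_add[OF h(1)] by (metis diff_add_cancel)
    then show ?thesis
      using h(2) h_span[OF diff_qproj_in_span] s by simp
  qed
  moreover have "finite (qrs_base \<Sigma> J)"
    unfolding qrs_base_def using \<open>independent \<Sigma>\<close> independent_bound by blast
  ultimately have "h x > 0" if "x \<in> qrs_pos \<Delta> \<Sigma> J" for x
    using that nonneg_int_comb_pos[OF _ h(1)] unfolding qrs_pos_def qrs_roots_def by blast
  then show ?thesis
    using h(1) that by blast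
qed

lemma qrs_root_height_system:
  fixes \<Delta> \<Sigma> J :: "'a::euclidean_space set"
  assumes rs: "root_system \<Delta>" and base: "is_base \<Delta> \<Sigma>" and "J \<subseteq> \<Sigma>"
  obtains h where "root_height_system (qrs_roots \<Delta> J) (qrs_pos \<Delta> \<Sigma> J) h"
proof -
  obtain h :: "'a \<Rightarrow> real" where h: "linear h" "\<And>x. x \<in> qrs_pos \<Delta> \<Sigma> J \<Longrightarrow> h x > 0"
    using qrs_height_exists[OF base \<open>J \<subseteq> \<Sigma>\<close>] by blast
  have "J \<subseteq> \<Delta>"
    using base \<open>J \<subseteq> \<Sigma>\<close> unfolding is_base_def by blast
  have "root_height_system (qrs_roots \<Delta> J) (qrs_pos \<Delta> \<Sigma> J) h"
  proof
    show "finite (qrs_roots \<Delta> J)"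
      using rs unfolding root_system_def qrs_roots_def by simp
    show "0 \<notin> qrs_roots \<Delta> J" "qrs_pos \<Delta> \<Sigma> J \<subseteq> qrs_roots \<Delta> J"
      unfolding qrs_roots_def qrs_pos_def by auto
    show "- x \<in> qrs_roots \<Delta> J" if "x \<in> qrs_roots \<Delta> J" for x
      using qrs_roots_uminus[OF rs that] .
    show "x + y \<in> qrs_roots \<Delta> J"
      if "x \<in> qrs_roots \<Delta> J" "y \<in> qrs_roots \<Delta> J" "x \<noteq> - y" "x \<bullet> y < 0" for x y
      using qrs_roots_obtuse_add[OF rs \<open>J \<subseteq> \<Delta>\<close> that] .
    show "x \<in> qrs_pos \<Delta> \<Sigma> J \<or> - x \<in> qrs_pos \<Delta> \<Sigma> J" if "x \<in> qrs_roots \<Delta> J" for x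
      using qrs_root_pos_or_neg[OF rs base that] .
    show "x + y \<in> qrs_pos \<Delta> \<Sigma> J"
      if "x \<in> qrs_pos \<Delta> \<Sigma> J" "y \<in> qrs_pos \<Delta> \<Sigma> J" "x + y \<in> qrs_roots \<Delta> J" for x y
      using that unfolding qrs_pos_def by (auto intro: nonneg_int_comb_add)
    show "h (x + y) = h x + h y" for x y
      using linear_add[OF h(1)] .
    show "h x > 0" if "x \<in> qrs_pos \<Delta> \<Sigma> J" for x
      using h(2)[OF that] .
  qed
  then show ?thesis
    using that by blast
qed

theorem proposition4p17:
  fixes \<Delta> \<Sigma> J \<Phi> :: "'a::euclidean_space set"
  assumes "root_system \<Delta>"
    and "is_base \<Delta> \<Sigma>"
    and "J \<subset> \<Sigma>"
    and "inversion_set (qrs_roots \<Delta> J) (qrs_pos \<Delta> \<Sigma> J) \<Phi>"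
  shows "partial_order_on (graph_components (qrs_pos \<Delta> \<Sigma> J) \<Phi>)
           (comp_le (qrs_roots \<Delta> J) (qrs_pos \<Delta> \<Sigma> J) \<Phi>)"
proof -
  obtain h where "root_height_system (qrs_roots \<Delta> J) (qrs_pos \<Delta> \<Sigma> J) h"
    using qrs_root_height_system assms(1-3) by blast
  \<comment> \<open>only the closedness of \<open>\<Phi>\<close> is needed, not that of its complement\<close>
  then interpret root_height_closed_subset "qrs_roots \<Delta> J" "qrs_pos \<Delta> \<Sigma> J" h \<Phi>
    using assms(4) unfolding inversion_set_def
    by unfold_locales (simp_all add: root_height_system_def)
  show ?thesis
    by (rule partial_order_comp_le)
qed

end
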